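(* Let $a,b,c,y,\alpha$ be real numbers with $0<c<y<1$ and $y<b<a$. Then \[ \int_{c}^{y}\frac{1-\alpha u}{1-u^2}\,\frac{u\,\mathrm{d}u}{\sqrt{(a-u)(b-u)(u-c)}} =\frac{\sqrt{y-c}}{(1-c^2)\sqrt{(a-c)(b-c)}}\left(2c(1-c\alpha)\,X+\frac23(1-2c\alpha)(y-c)\,Y-\frac25\,\alpha\,(y-c)^2\,Z\right), \] where, writing $\mathbf{x}=\left(\frac{y-c}{1-c},\,-\frac{y-c}{1+c},\,-\frac{y-c}{c-a},\,-\frac{y-c}{c-b}\right)$, \[ X=\mathrm{F}_{D}^{(4)}\left(\tfrac12;1,1,\tfrac12,\tfrac12;\tfrac32;\mathbf{x}\right),\quad Y=\mathrm{F}_{D}^{(4)}\left(\tfrac32;1,1,\tfrac12,\tfrac12;\tfrac52;\mathbf{x}\right),\quad Z=\mathrm{F}_{D}^{(4)}\left(\tfrac52;1,1,\tfrac12,\tfrac12;\tfrac72;\mathbf{x}\right). \]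
   Context: For $n\ge1$, the Lauricella hypergeometric function of $n$ variables is \[ \mathrm{F}_{D}^{(n)}(a;b_1,\dots,b_n;c;x_1,\dots,x_n)=\sum_{m_1,\dots,m_n\ge0}\frac{(a)_{m_1+\cdots+m_n}(b_1)_{m_1}\cdots(b_n)_{m_n}}{(c)_{m_1+\cdots+m_n}\,m_1!\cdots m_n!}\,x_1^{m_1}\cdots x_n^{m_n},\qquad |x_i|<1, \] where $(\lambda)_m=\Gamma(\lambda+m)/\Gamma(\lambda)$ is the Pochhammer symbol; for $\operatorname{Re}c>\operatorname{Re}a>0$ it equals $\frac{\Gamma(c)}{\Gamma(a)\Gamma(c-a)}\int_0^1 u^{a-1}(1-u)^{c-a-1}\prod_{i=1}^n(1-x_iu)^{-b_i}\,\mathrm{d}u$, which gives its analytic continuation to $x_i\notin[1,\infty)$. *)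

theory Defs
  imports "HOL-Analysis.Analysis"
begin

text \<open>Lauricella hypergeometric function F_D^(n), n = length xs = length bs,
  given by its defining multiple power series (valid for |x_i| < 1).\<close>

definition lauricella_FD :: "real \<Rightarrow> real list \<Rightarrow> real \<Rightarrow> real list \<Rightarrow> real" where
  "lauricella_FD a bs c xs =
     infsum (\<lambda>m. pochhammer a (\<Sum>i<length xs. m i) / pochhammer c (\<Sum>i<length xs. m i)
                 * (\<Prod>i<length xs. pochhammer (bs ! i) (m i) * (xs ! i) ^ (m i) / fact (m i)))
            (Pi\<^sub>E {..<length xs} (\<lambda>_. UNIV))"

end

theory Submission
  imports Defs
begin

text \<open>By the binomial theorem, the Lauricella series with the factor
  \<open>(a)\<^sub>|\<^sub>m\<^sub>| / (c)\<^sub>|\<^sub>m\<^sub>|\<close> removed sums to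
  \<open>\<Prod>i. (1 - x\<^sub>i)^(-b\<^sub>i)\<close>; grouped by the total degree \<open>|m|\<close> it becomes a power series
  in a common scaling parameter \<open>t\<close> of the \<open>x\<^sub>i\<close>. For \<open>c = a + 1\<close> the removed factor is
  \<open>a / (a + |m|) = a \<integral>\<^sub>0\<^sup>1 t^(a + |m| - 1) dt\<close>, so dominated convergence gives Euler's integral
  \<open>F\<^sub>D(a; b; a + 1; x) = a \<integral>\<^sub>0\<^sup>1 t^(a - 1) \<Prod>i. (1 - x\<^sub>i t)^(-b\<^sub>i) dt\<close>.
  The substitution \<open>u = c + (y - c) t\<close> turns the integrand of the theorem into this kernel for the
  given \<open>x\<close>, times \<open>(1 - \<alpha> u) u / \<surd>(u - c)\<close>, and expanding \<open>(1 - \<alpha> u) u\<close> in powers of \<open>t\<close>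
  produces the three terms with \<open>a = 1/2, 3/2, 5/2\<close>, i.e. \<open>X\<close>, \<open>Y\<close> and \<open>Z\<close>.\<close>

lemma binomial_series_pochhammer:
  fixes b z :: real
  assumes "\<bar>z\<bar> < 1"
  shows "(\<lambda>n. pochhammer b n * z ^ n / fact n) sums (1 - z) powr (- b)"
proof -
  have "(\<lambda>n. ((- b) gchoose n) * (- z) ^ n) sums (1 + (- z)) powr (- b)"
    by (rule gen_binomial_real) (use assms in simp)
  moreover have "((- b) gchoose n) * (- z) ^ n = pochhammer b n * z ^ n / fact n" for n
  proof -
    have "((- b) gchoose n) * (- z) ^ n = ((- 1) ^ n * (- 1) ^ n) * (pochhammer b n * z ^ n / fact n)"
      by (simp add: gbinomial_pochhammer power_minus[of z])
    also have "(- 1 :: real) ^ n * (- 1) ^ n = 1"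
      by (simp flip: power_mult_distrib)
    finally show ?thesis by simp
  qed
  ultimately show ?thesis by simp
qed

lemma has_sum_binomial_series_pochhammer:
  fixes b z :: real
  assumes "\<bar>z\<bar> < 1" "b > 0"
  shows "((\<lambda>n. pochhammer b n * z ^ n / fact n) has_sum (1 - z) powr (- b)) UNIV"
    and "(\<lambda>n. norm (pochhammer b n * z ^ n / fact n)) summable_on UNIV"
proof -
  have "norm (pochhammer b n * z ^ n / fact n) = pochhammer b n * \<bar>z\<bar> ^ n / fact n" for n
    using pochhammer_pos[OF \<open>b > 0\<close>, of n] by (simp add: abs_mult power_abs)
  then have "summable (\<lambda>n. norm (pochhammer b n * z ^ n / fact n))"
    using binomial_series_pochhammer[of "\<bar>z\<bar>" b] assms(1) by (simp add: sums_iff)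
  then show "((\<lambda>n. pochhammer b n * z ^ n / fact n) has_sum (1 - z) powr (- b)) UNIV"
    by (rule norm_summable_imp_has_sum[OF _ binomial_series_pochhammer[OF assms(1)]])
  show "(\<lambda>n. norm (pochhammer b n * z ^ n / fact n)) summable_on UNIV"
    using norm_summable_imp_summable_on[of "\<lambda>n. norm (pochhammer b n * z ^ n / fact n)"]
      \<open>summable _\<close> by simp
qed

abbreviation multi_indices :: "nat \<Rightarrow> (nat \<Rightarrow> nat) set" where
  "multi_indices n \<equiv> Pi\<^sub>E {..<n} (\<lambda>_. UNIV)"

definition lauricella_term :: "real list \<Rightarrow> real list \<Rightarrow> (nat \<Rightarrow> nat) \<Rightarrow> real" where
  "lauricella_term bs xs m = (\<Prod>i<length xs. pochhammer (bs ! i) (m i) * (xs ! i) ^ m i / fact (m i))"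

definition lauricella_kernel :: "real list \<Rightarrow> real list \<Rightarrow> real" where
  "lauricella_kernel bs xs = (\<Prod>i<length xs. (1 - xs ! i) powr (- (bs ! i)))"

lemma infsum_lauricella_term:
  assumes "\<And>i. i < length xs \<Longrightarrow> bs ! i > 0" "\<And>i. i < length xs \<Longrightarrow> \<bar>xs ! i\<bar> < 1"
  shows "infsum (lauricella_term bs xs) (multi_indices (length xs)) = lauricella_kernel bs xs"
  unfolding lauricella_term_def lauricella_kernel_def
  using has_sum_binomial_series_pochhammer[of "xs ! i" "bs ! i" for i] assms
  by (subst infsum_prod_PiE_abs) (auto intro!: prod.cong infsumI)

lemma norm_lauricella_term:
  assumes "\<And>i. i < length xs \<Longrightarrow> bs ! i > 0"
  shows "norm (lauricella_term bs xs m) = lauricella_term bs (map abs xs) m"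
  unfolding lauricella_term_def real_norm_def abs_prod
proof (rule prod.cong)
  show "{..<length xs} = {..<length (map abs xs)}" by simp
  fix i assume "i \<in> {..<length (map abs xs)}"
  then have "pochhammer (bs ! i) (m i) > 0"
    using assms pochhammer_pos by auto
  then show "\<bar>pochhammer (bs ! i) (m i) * (xs ! i) ^ m i / fact (m i)\<bar>
      = pochhammer (bs ! i) (m i) * (map abs xs ! i) ^ m i / fact (m i)"
    using \<open>i \<in> _\<close> by (simp add: abs_mult power_abs)
qed

lemma has_sum_lauricella_term:
  assumes "\<And>i. i < length xs \<Longrightarrow> bs ! i > 0" "\<And>i. i < length xs \<Longrightarrow> \<bar>xs ! i\<bar> < 1"
  shows "(lauricella_term bs xs has_sum lauricella_kernel bs xs) (multi_indices (length xs))"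
    and "(\<lambda>m. norm (lauricella_term bs xs m)) summable_on multi_indices (length xs)"
proof -
  have "infsum (\<lambda>m. norm (lauricella_term bs xs m)) (multi_indices (length xs))
      = lauricella_kernel bs (map abs xs)"
    using infsum_lauricella_term[of "map abs xs" bs] assms
    by (simp add: norm_lauricella_term[OF assms(1)] del: real_norm_def)
  also have "\<dots> > 0"
    unfolding lauricella_kernel_def using assms(2) by (intro prod_pos) (simp add: less_imp_neq)
  \<comment> \<open>a nonnegative family with nonzero infinite sum is summable, by the junk value of \<open>infsum\<close>\<close>
  finally show "(\<lambda>m. norm (lauricella_term bs xs m)) summable_on multi_indices (length xs)"
    using infsum_not_exists by fastforce
  then show "(lauricella_term bs xs has_sum lauricella_kernel bs xs) (multi_indices (length xs))"
    using infsum_lauricella_term[OF assms] abs_summable_summable has_sum_infsum by fastforce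
qed

lemma sums_infsum_by_fibres:
  fixes g :: "'a \<Rightarrow> real" and deg :: "'a \<Rightarrow> nat"
  assumes "g summable_on A" "\<And>k. finite {m \<in> A. deg m = k}"
  shows "(\<lambda>k. \<Sum>m \<in> {m \<in> A. deg m = k}. g m) sums infsum g A"
proof -
  define B where "B k = {m \<in> A. deg m = k}" for k
  have bij: "bij_betw (\<lambda>m. (deg m, m)) A (Sigma UNIV B)"
    unfolding B_def by (rule bij_betwI[where g = snd]) auto
  have "(\<lambda>(k, m). g m) summable_on Sigma UNIV B"
    using summable_on_reindex_bij_betw[OF bij, of "\<lambda>(k, m). g m"] assms(1) by simp
  moreover have "infsum (\<lambda>(k, m). g m) (Sigma UNIV B) = infsum g A"
    using infsum_reindex_bij_betw[OF bij, of "\<lambda>(k, m). g m"] by simp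
  ultimately have "((\<lambda>k. infsum g (B k)) has_sum infsum g A) UNIV"
    using summable_on_Sigma_banach[of "\<lambda>k m. g m" UNIV B] infsum_Sigma'_banach[of "\<lambda>k m. g m" UNIV B]
    by (metis has_sum_infsum)
  then show ?thesis
    unfolding B_def using assms(2) by (auto intro: has_sum_imp_sums)
qed

definition multi_indices_of_degree :: "nat \<Rightarrow> nat \<Rightarrow> (nat \<Rightarrow> nat) set" where
  "multi_indices_of_degree n k = {m \<in> multi_indices n. (\<Sum>i<n. m i) = k}"

lemma finite_multi_indices_of_degree: "finite (multi_indices_of_degree n k)"
proof (rule finite_subset)
  show "multi_indices_of_degree n k \<subseteq> Pi\<^sub>E {..<n} (\<lambda>_. {..k})"
    unfolding multi_indices_of_degree_def
    by (auto simp: PiE_def Pi_def intro!: member_le_sum[of _ "{..<n}", simplified])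
qed (simp add: finite_PiE)

definition lauricella_coeff :: "real list \<Rightarrow> real list \<Rightarrow> nat \<Rightarrow> real" where
  "lauricella_coeff bs xs k = (\<Sum>m \<in> multi_indices_of_degree (length xs) k. lauricella_term bs xs m)"

lemma sums_by_degree_multi_indices:
  fixes g :: "(nat \<Rightarrow> nat) \<Rightarrow> real"
  assumes "g summable_on multi_indices (length xs)"
  shows "(\<lambda>k. \<Sum>m \<in> multi_indices_of_degree (length xs) k. g m) sums infsum g (multi_indices (length xs))"
  using sums_infsum_by_fibres[OF assms, of "\<lambda>m. \<Sum>i<length xs. m i"] finite_multi_indices_of_degree
  unfolding multi_indices_of_degree_def by simp

lemma lauricella_term_scale:
  "lauricella_term bs (map (\<lambda>x. x * t) xs) m = lauricella_term bs xs m * t ^ (\<Sum>i<length xs. m i)"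
proof -
  have "lauricella_term bs (map (\<lambda>x. x * t) xs) m =
      (\<Prod>i<length xs. pochhammer (bs ! i) (m i) * (xs ! i) ^ m i / fact (m i) * t ^ m i)"
    unfolding lauricella_term_def by (intro prod.cong refl) (auto simp: power_mult_distrib)
  then show ?thesis
    unfolding lauricella_term_def prod.distrib by (simp add: power_sum)
qed

lemma lauricella_kernel_power_series:
  assumes "\<And>i. i < length xs \<Longrightarrow> bs ! i > 0" "\<And>i. i < length xs \<Longrightarrow> \<bar>xs ! i\<bar> < 1"
    and "\<bar>t\<bar> \<le> 1"
  shows "(\<lambda>k. lauricella_coeff bs xs k * t ^ k) sums lauricella_kernel bs (map (\<lambda>x. x * t) xs)"
proof -
  let ?ys = "map (\<lambda>x. x * t) xs"
  have "\<bar>?ys ! i\<bar> < 1" if "i < length ?ys" for i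
  proof -
    have "\<bar>xs ! i * t\<bar> \<le> \<bar>xs ! i\<bar>"
      using \<open>\<bar>t\<bar> \<le> 1\<close> by (simp add: abs_mult mult_left_le)
    then show ?thesis using assms(2)[of i] that by simp
  qed
  then have "(lauricella_term bs ?ys has_sum lauricella_kernel bs ?ys) (multi_indices (length xs))"
    using has_sum_lauricella_term(1)[of ?ys bs] assms(1) by simp
  then have "(\<lambda>k. \<Sum>m \<in> multi_indices_of_degree (length xs) k. lauricella_term bs ?ys m)
      sums lauricella_kernel bs ?ys"
    using sums_by_degree_multi_indices[of "lauricella_term bs ?ys" xs]
    by (metis has_sum_imp_summable infsumI)
  then show ?thesis
    unfolding lauricella_term_scale lauricella_coeff_def sum_distrib_right
    by (simp add: multi_indices_of_degree_def)
qed

lemma summable_abs_lauricella_coeff: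
  assumes "\<And>i. i < length xs \<Longrightarrow> bs ! i > 0" "\<And>i. i < length xs \<Longrightarrow> \<bar>xs ! i\<bar> < 1"
  shows "summable (\<lambda>k. \<bar>lauricella_coeff bs xs k\<bar>)"
proof (rule summable_comparison_test'[where N = 0])
  show "summable (\<lambda>k. \<Sum>m \<in> multi_indices_of_degree (length xs) k. norm (lauricella_term bs xs m))"
    using sums_by_degree_multi_indices has_sum_lauricella_term(2)[OF assms] sums_summable
    by blast
  show "norm \<bar>lauricella_coeff bs xs k\<bar>
      \<le> (\<Sum>m \<in> multi_indices_of_degree (length xs) k. norm (lauricella_term bs xs m))" for k
    unfolding lauricella_coeff_def using sum_abs by simp
qed

lemma pochhammer_div_pochhammer_succ:
  fixes a :: real
  assumes "a > 0"
  shows "pochhammer a k / pochhammer (a + 1) k = a / (a + of_nat k)"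
proof -
  have "pochhammer a k * (a + of_nat k) = a * pochhammer (a + 1) k"
    using pochhammer_Suc[of a k] pochhammer_rec[of a k] by simp
  moreover have "pochhammer (a + 1) k > 0" "a + of_nat k > 0"
    using assms by (auto intro: pochhammer_pos)
  ultimately show ?thesis by (simp add: field_simps)
qed

lemma lauricella_FD_succ_sums:
  fixes a :: real
  assumes "a > 0"
    and "\<And>i. i < length xs \<Longrightarrow> bs ! i > 0" "\<And>i. i < length xs \<Longrightarrow> \<bar>xs ! i\<bar> < 1"
  shows "(\<lambda>k. a / (a + of_nat k) * lauricella_coeff bs xs k) sums lauricella_FD a bs (a + 1) xs"
proof -
  define g where "g m = a / (a + of_nat (\<Sum>i<length xs. m i)) * lauricella_term bs xs m" for m
  have "lauricella_FD a bs (a + 1) xs = infsum g (multi_indices (length xs))"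
    unfolding lauricella_FD_def g_def lauricella_term_def
    by (intro infsum_cong) (simp add: pochhammer_div_pochhammer_succ[OF assms(1)])
  moreover have "g summable_on multi_indices (length xs)"
  proof (rule abs_summable_summable, rule summable_on_comparison_test)
    show "(\<lambda>m. norm (lauricella_term bs xs m)) summable_on multi_indices (length xs)"
      using has_sum_lauricella_term(2)[OF assms(2,3)] .
    show "0 \<le> norm (g m)" for m
      by simp
    show "norm (g m) \<le> norm (lauricella_term bs xs m)" for m
    proof -
      have bound: "\<bar>a / (a + real k)\<bar> \<le> 1" for k
        using assms(1) by simp
      have "\<bar>a / (a + real (\<Sum>i<length xs. m i))\<bar> * \<bar>lauricella_term bs xs m\<bar>
          \<le> 1 * \<bar>lauricella_term bs xs m\<bar>"
        by (intro mult_right_mono bound abs_ge_zero)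
      then show ?thesis
        by (simp only: g_def real_norm_def abs_mult mult_1)
    qed
  qed
  ultimately show ?thesis
    using sums_by_degree_multi_indices[of g xs]
    by (simp add: g_def lauricella_coeff_def sum_distrib_left multi_indices_of_degree_def)
qed

lemma powr_add_of_nat:
  fixes t :: real
  assumes "t \<ge> 0"
  shows "t powr (e + real n) = t powr e * t ^ n"
  using assms by (cases "t = 0") (simp_all add: powr_add powr_realpow)

lemma summable_divide_add_of_nat:
  fixes a :: real
  assumes "a > 0" "summable (\<lambda>n. \<bar>d n\<bar>)"
  shows "summable (\<lambda>n. d n / (a + real n))"
proof (rule summable_comparison_test'[where N = 0])
  show "summable (\<lambda>n. \<bar>d n\<bar> / a)"
    using assms(2) by (rule summable_divide)
  show "norm (d n / (a + real n)) \<le> \<bar>d n\<bar> / a" for n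
  proof -
    have "\<bar>d n\<bar> / (a + real n) \<le> \<bar>d n\<bar> / a"
      by (rule divide_left_mono) (use assms(1) in auto)
    then show ?thesis
      using assms(1) by (simp add: abs_divide)
  qed
qed

lemma has_integral_powr_times_power_series:
  fixes a :: real and d :: "nat \<Rightarrow> real" and f :: "real \<Rightarrow> real"
  assumes "a > 0" "summable (\<lambda>n. \<bar>d n\<bar>)" "\<And>t. t \<in> {0..1} \<Longrightarrow> (\<lambda>n. d n * t ^ n) sums f t"
  shows "((\<lambda>t. t powr (a - 1) * f t) has_integral (\<Sum>n. d n / (a + real n))) {0..1}"
proof -
  define s where "s k t = (\<Sum>n<k. d n * t powr (a - 1 + real n))" for k t
  show ?thesis
  proof (rule has_integral_dominated_convergence)
    have "((\<lambda>t. t powr (a - 1 + real n)) has_integral 1 / (a + real n)) {0..1}" for n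
      using has_integral_powr_from_0[of "a - 1 + real n" 1] assms(1) by simp
    from has_integral_mult_right[OF this, of "d n" for n]
    have "((\<lambda>t. d n * t powr (a - 1 + real n)) has_integral d n / (a + real n)) {0..1}" for n
      by simp
    then show "(s k has_integral (\<Sum>n<k. d n / (a + real n))) {0..1}" for k
      unfolding s_def by (intro has_integral_sum) auto
    show "(\<lambda>t. (\<Sum>n. \<bar>d n\<bar>) * t powr (a - 1)) integrable_on {0..1}"
      using integrable_on_cmult_left[OF integrable_on_powr_from_0[of "a - 1" 1], of "\<Sum>n. \<bar>d n\<bar>"]
        assms(1) by simp
    show "\<forall>t\<in>{0..1}. norm (s k t) \<le> (\<Sum>n. \<bar>d n\<bar>) * t powr (a - 1)" for k
    proof
      fix t :: real assume "t \<in> {0..1}"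
      then have "norm (s k t) \<le> (\<Sum>n<k. \<bar>d n\<bar> * t powr (a - 1))"
        unfolding s_def
        by (intro sum_norm_le) (simp add: powr_add_of_nat abs_mult mult_left_mono mult_left_le power_le_one)
      also have "\<dots> \<le> (\<Sum>n. \<bar>d n\<bar>) * t powr (a - 1)"
        unfolding sum_distrib_right[symmetric]
        by (intro mult_right_mono sum_le_suminf assms(2)) auto
      finally show "norm (s k t) \<le> (\<Sum>n. \<bar>d n\<bar>) * t powr (a - 1)" .
    qed
    show "\<forall>t\<in>{0..1}. (\<lambda>k. s k t) \<longlonglongrightarrow> t powr (a - 1) * f t"
    proof
      fix t :: real assume "t \<in> {0..1}"
      then have "s k t = t powr (a - 1) * (\<Sum>n<k. d n * t ^ n)" for k
        unfolding s_def sum_distrib_left by (intro sum.cong refl) (simp add: powr_add_of_nat)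
      then show "(\<lambda>k. s k t) \<longlonglongrightarrow> t powr (a - 1) * f t"
        using assms(3)[OF \<open>t \<in> {0..1}\<close>] by (simp add: sums_def tendsto_mult_left)
    qed
    from assms(1,2) have "summable (\<lambda>n. d n / (a + real n))"
      by (rule summable_divide_add_of_nat)
    then show "(\<lambda>k. \<Sum>n<k. d n / (a + real n)) \<longlonglongrightarrow> (\<Sum>n. d n / (a + real n))"
      by (rule summable_LIMSEQ)
  qed
qed

lemma lauricella_FD_succ_Euler_integral:
  fixes a :: real
  assumes "a > 0"
    and "\<And>i. i < length xs \<Longrightarrow> bs ! i > 0" "\<And>i. i < length xs \<Longrightarrow> \<bar>xs ! i\<bar> < 1"
  shows "((\<lambda>t. t powr (a - 1) * lauricella_kernel bs (map (\<lambda>x. x * t) xs))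
      has_integral lauricella_FD a bs (a + 1) xs / a) {0..1}"
proof -
  have "(\<lambda>k. lauricella_coeff bs xs k / (a + real k)) sums (lauricella_FD a bs (a + 1) xs / a)"
    using sums_divide[OF lauricella_FD_succ_sums[OF assms], of a] assms(1) by simp
  then have "lauricella_FD a bs (a + 1) xs / a = (\<Sum>k. lauricella_coeff bs xs k / (a + real k))"
    by (simp add: sums_iff)
  moreover have "(\<lambda>k. lauricella_coeff bs xs k * t ^ k) sums lauricella_kernel bs (map (\<lambda>x. x * t) xs)"
    if "t \<in> {0..1}" for t
    using that by (intro lauricella_kernel_power_series[OF assms(2,3)]) auto
  ultimately show ?thesis
    using has_integral_powr_times_power_series[OF assms(1) summable_abs_lauricella_coeff[OF assms(2,3)]]
    by simp
qed

lemma has_integral_half_integer_powers_times_kernel: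
  assumes "\<And>i. i < length xs \<Longrightarrow> bs ! i > 0" "\<And>i. i < length xs \<Longrightarrow> \<bar>xs ! i\<bar> < 1"
  shows "((\<lambda>t. (p0 * t powr (-1/2) + p1 * t powr (1/2) - p2 * t powr (3/2))
            * lauricella_kernel bs (map (\<lambda>x. x * t) xs))
         has_integral 2 * p0 * lauricella_FD (1/2) bs (3/2) xs + 2/3 * p1 * lauricella_FD (3/2) bs (5/2) xs
           - 2/5 * p2 * lauricella_FD (5/2) bs (7/2) xs) {0..1}"
proof -
  let ?G = "\<lambda>t. lauricella_kernel bs (map (\<lambda>x. x * t) xs)"
  have I0: "((\<lambda>t. t powr (-1/2) * ?G t) has_integral 2 * lauricella_FD (1/2) bs (3/2) xs) {0..1}"
    using lauricella_FD_succ_Euler_integral[of "1/2" xs bs] assms by (simp add: mult.commute)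
  have I1: "((\<lambda>t. t powr (1/2) * ?G t) has_integral 2/3 * lauricella_FD (3/2) bs (5/2) xs) {0..1}"
    using lauricella_FD_succ_Euler_integral[of "3/2" xs bs] assms by (simp add: mult.commute)
  have I2: "((\<lambda>t. t powr (3/2) * ?G t) has_integral 2/5 * lauricella_FD (5/2) bs (7/2) xs) {0..1}"
    using lauricella_FD_succ_Euler_integral[of "5/2" xs bs] assms by (simp add: mult.commute)
  have "((\<lambda>t. p0 * (t powr (-1/2) * ?G t) + p1 * (t powr (1/2) * ?G t) - p2 * (t powr (3/2) * ?G t))
      has_integral p0 * (2 * lauricella_FD (1/2) bs (3/2) xs) + p1 * (2/3 * lauricella_FD (3/2) bs (5/2) xs)
        - p2 * (2/5 * lauricella_FD (5/2) bs (7/2) xs)) {0..1}"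
    by (intro has_integral_diff has_integral_add has_integral_mult_right I0 I1 I2)
  then show ?thesis
    by (simp add: algebra_simps)
qed

lemma has_integral_rescale_unit_interval:
  fixes f :: "real \<Rightarrow> real"
  assumes "(f has_integral I) {0..1}" "c < y"
  shows "((\<lambda>u. f ((u - c) / (y - c))) has_integral (y - c) * I) {c..y}"
proof -
  have affine: "((\<lambda>u. f ((1 / (y - c)) *\<^sub>R u + - c / (y - c))) has_integral I /\<^sub>R (1 / (y - c)) ^ DIM(real))
      (cbox ((0 - - c / (y - c)) /\<^sub>R (1 / (y - c))) ((1 - - c / (y - c)) /\<^sub>R (1 / (y - c))))"
    using assms by (intro has_integral_affinity') auto
  have box: "cbox ((0 - - c / (y - c)) /\<^sub>R (1 / (y - c))) ((1 - - c / (y - c)) /\<^sub>R (1 / (y - c))) = {c..y}"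
    using assms(2) by (simp add: cbox_interval field_simps)
  have "(1 / (y - c)) *\<^sub>R u + - c / (y - c) = (u - c) / (y - c)" for u
    by (simp add: diff_divide_distrib)
  moreover have "I /\<^sub>R (1 / (y - c)) ^ DIM(real) = (y - c) * I"
    by simp
  ultimately show ?thesis
    using affine unfolding box by simp
qed

lemma lauricella_kernel_at_substitution:
  fixes a b c u y :: real
  assumes "-1 < c" "c < u" "u < 1" "u < b" "b < a" "y \<noteq> c"
  defines "t \<equiv> (u - c) / (y - c)"
  shows "lauricella_kernel [1, 1, 1/2, 1/2]
           (map (\<lambda>x. x * t) [(y - c) / (1 - c), - (y - c) / (1 + c), - (y - c) / (c - a), - (y - c) / (c - b)])
         = (1 - c) / (1 - u) * ((1 + c) / (1 + u)) * sqrt ((a - c) / (a - u)) * sqrt ((b - c) / (b - u))"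
proof -
  have "(y - c) * t = u - c"
    using assms(6) by (simp add: t_def)
  then have scaled: "(y - c) / q * t = (u - c) / q" "- (y - c) / q * t = - ((u - c) / q)" for q
    by (simp_all only: times_divide_eq_left mult_minus_left minus_divide_left)
  have "1 - (y - c) / (1 - c) * t = (1 - u) / (1 - c)"
    "1 - - (y - c) / (1 + c) * t = (1 + u) / (1 + c)"
    "1 - - (y - c) / (c - a) * t = (a - u) / (a - c)"
    "1 - - (y - c) / (c - b) * t = (b - u) / (b - c)"
    using assms(1-5) unfolding scaled by (simp_all add: field_simps)
  moreover have "q powr - 1 = 1 / q" "q powr - (1/2) = 1 / sqrt q" if "q > 0" for q :: real
    using that by (simp_all add: powr_minus_divide powr_half_sqrt)
  ultimately show ?thesis
    using assms(1-5) by (simp add: lauricella_kernel_def eval_nat_numeral real_sqrt_divide)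
qed

lemma half_integer_powers_at_substitution:
  fixes c u y \<alpha> :: real
  assumes "c < u" "c < y"
  defines "t \<equiv> (u - c) / (y - c)"
  shows "c * (1 - c * \<alpha>) * t powr (-1/2) + (1 - 2 * c * \<alpha>) * (y - c) * t powr (1/2)
           - \<alpha> * (y - c)^2 * t powr (3/2)
         = (1 - \<alpha> * u) * u * sqrt ((y - c) / (u - c))"
proof -
  have "t > 0"
    using assms by (simp add: t_def)
  have "t powr (1/2) = t * t powr (-1/2)" "t powr (3/2) = t^2 * t powr (-1/2)"
    using powr_add[of t 1 "-1/2"] powr_add[of t 2 "-1/2"] \<open>t > 0\<close> by (simp_all add: powr_realpow)
  then have split: "c * (1 - c * \<alpha>) * t powr (-1/2) + (1 - 2 * c * \<alpha>) * (y - c) * t powr (1/2)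
      - \<alpha> * (y - c)^2 * t powr (3/2)
      = (c * (1 - c * \<alpha>) + (1 - 2 * c * \<alpha>) * (y - c) * t - \<alpha> * (y - c)^2 * t^2) * t powr (-1/2)"
    by (simp add: algebra_simps)
  have u: "u = c + (y - c) * t"
    using assms by (simp add: t_def)
  have polynomial: "c * (1 - c * \<alpha>) + (1 - 2 * c * \<alpha>) * (y - c) * t - \<alpha> * (y - c)^2 * t^2
      = (1 - \<alpha> * u) * u"
    unfolding u by (simp add: algebra_simps power2_eq_square)
  have "t powr (-1/2) = sqrt ((y - c) / (u - c))"
    using \<open>t > 0\<close> by (simp add: t_def powr_minus_divide powr_half_sqrt real_sqrt_divide)
  with split show ?thesis
    by (simp only: polynomial)
qed

lemma integrand_at_substitution:
  fixes a b c y \<alpha> u :: real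
  assumes "0 < c" "c < u" "u \<le> y" "y < 1" "y < b" "b < a"
  defines "t \<equiv> (u - c) / (y - c)"
  shows "(1 - \<alpha> * u) / (1 - u^2) * (u / sqrt ((a - u) * (b - u) * (u - c)))
    = sqrt (y - c) / ((1 - c^2) * sqrt ((a - c) * (b - c))) / (y - c)
      * ((c * (1 - c * \<alpha>) * t powr (-1/2) + (1 - 2 * c * \<alpha>) * (y - c) * t powr (1/2)
            - \<alpha> * (y - c)^2 * t powr (3/2))
         * lauricella_kernel [1, 1, 1/2, 1/2]
             (map (\<lambda>x. x * t) [(y - c) / (1 - c), - (y - c) / (1 + c), - (y - c) / (c - a), - (y - c) / (c - b)]))"
proof -
  have sqrt_over: "sqrt (y - c) / D / (y - c) = 1 / (D * sqrt (y - c))" for D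
  proof -
    have "sqrt (y - c) / D / (y - c) = sqrt (y - c) / (y - c) / D"
      by (simp add: divide_divide_eq_left mult.commute)
    also have "\<dots> = 1 / (D * sqrt (y - c))"
      using assms by (simp add: sqrt_divide_self_eq inverse_eq_divide divide_divide_eq_left mult.commute)
    finally show ?thesis .
  qed
  have squares: "1 - u^2 = (1 - u) * (1 + u)" "1 - c^2 = (1 - c) * (1 + c)"
    by (simp_all add: algebra_simps power2_eq_square)
  have "sqrt (a - u) > 0" "sqrt (b - u) > 0" "sqrt (u - c) > 0" "sqrt (a - c) > 0" "sqrt (b - c) > 0"
    "sqrt (y - c) > 0" "1 - u > 0" "1 + u > 0" "1 - c > 0" "1 + c > 0"
    using assms(1-6) by auto
  moreover have kernel: "lauricella_kernel [1, 1, 1/2, 1/2]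
      (map (\<lambda>x. x * t) [(y - c) / (1 - c), - (y - c) / (1 + c), - (y - c) / (c - a), - (y - c) / (c - b)])
    = (1 - c) / (1 - u) * ((1 + c) / (1 + u)) * sqrt ((a - c) / (a - u)) * sqrt ((b - c) / (b - u))"
    unfolding t_def using assms(1-6) by (intro lauricella_kernel_at_substitution) auto
  moreover have powers: "c * (1 - c * \<alpha>) * t powr (-1/2) + (1 - 2 * c * \<alpha>) * (y - c) * t powr (1/2)
      - \<alpha> * (y - c)^2 * t powr (3/2) = (1 - \<alpha> * u) * u * sqrt ((y - c) / (u - c))"
    unfolding t_def using assms(2,3) by (intro half_integer_powers_at_substitution) auto
  ultimately show ?thesis
    unfolding kernel powers sqrt_over squares real_sqrt_mult real_sqrt_divide by (simp add: divide_simps)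
qed

lemma abs_substitution_points_less_one:
  fixes a b c y :: real
  assumes "0 < c" "c < y" "y < 1" "y < b" "b < a"
  defines "xs \<equiv> [(y - c) / (1 - c), - (y - c) / (1 + c), - (y - c) / (c - a), - (y - c) / (c - b)]"
  shows "\<And>i. i < length xs \<Longrightarrow> \<bar>xs ! i\<bar> < 1"
proof -
  have "\<bar>(y - c) / (1 - c)\<bar> < 1" "\<bar>- (y - c) / (1 + c)\<bar> < 1"
    "\<bar>- (y - c) / (c - a)\<bar> < 1" "\<bar>- (y - c) / (c - b)\<bar> < 1"
    using assms(1-5) by (simp_all add: abs_div_pos divide_less_eq)
  then show "\<And>i. i < length xs \<Longrightarrow> \<bar>xs ! i\<bar> < 1"
    by (auto simp: xs_def less_Suc_eq numeral_eq_Suc)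
qed

theorem mainTheorem2:
  fixes a b c y \<alpha> :: real
  assumes "0 < c" "c < y" "y < 1" "y < b" "b < a"
  defines "xs \<equiv> [(y - c) / (1 - c), - (y - c) / (1 + c), - (y - c) / (c - a), - (y - c) / (c - b)]"
  defines "X \<equiv> lauricella_FD (1/2) [1, 1, 1/2, 1/2] (3/2) xs"
  defines "Y \<equiv> lauricella_FD (3/2) [1, 1, 1/2, 1/2] (5/2) xs"
  defines "Z \<equiv> lauricella_FD (5/2) [1, 1, 1/2, 1/2] (7/2) xs"
  shows "((\<lambda>u. (1 - \<alpha> * u) / (1 - u^2) * (u / sqrt ((a - u) * (b - u) * (u - c))))
          has_integral
          (sqrt (y - c) / ((1 - c^2) * sqrt ((a - c) * (b - c)))
            * (2 * c * (1 - c * \<alpha>) * X + 2/3 * (1 - 2 * c * \<alpha>) * (y - c) * Y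
               - 2/5 * \<alpha> * (y - c)^2 * Z))) {c..y}"
proof -
  define K where "K = sqrt (y - c) / ((1 - c^2) * sqrt ((a - c) * (b - c)))"
  define V where "V = 2 * c * (1 - c * \<alpha>) * X + 2/3 * (1 - 2 * c * \<alpha>) * (y - c) * Y - 2/5 * \<alpha> * (y - c)^2 * Z"
  define F where "F t = K / (y - c) * ((c * (1 - c * \<alpha>) * t powr (-1/2)
      + (1 - 2 * c * \<alpha>) * (y - c) * t powr (1/2) - \<alpha> * (y - c)^2 * t powr (3/2))
      * lauricella_kernel [1, 1, 1/2, 1/2] (map (\<lambda>x. x * t) xs))" for t
  have "[1, 1, 1/2, 1/2 :: real] ! i > 0" if "i < length xs" for i
    using that by (auto simp: xs_def less_Suc_eq numeral_eq_Suc)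
  from has_integral_half_integer_powers_times_kernel[OF this abs_substitution_points_less_one[OF assms(1-5)],
      of "c * (1 - c * \<alpha>)" "(1 - 2 * c * \<alpha>) * (y - c)" "\<alpha> * (y - c)^2", folded xs_def]
  have "((\<lambda>t. (c * (1 - c * \<alpha>) * t powr (-1/2) + (1 - 2 * c * \<alpha>) * (y - c) * t powr (1/2)
      - \<alpha> * (y - c)^2 * t powr (3/2)) * lauricella_kernel [1, 1, 1/2, 1/2] (map (\<lambda>x. x * t) xs))
      has_integral V) {0..1}"
    unfolding V_def X_def Y_def Z_def by (simp only: mult.assoc)
  then have "(F has_integral K / (y - c) * V) {0..1}"
    unfolding F_def by (rule has_integral_mult_right)
  from has_integral_rescale_unit_interval[OF this assms(2)] assms(2)
  have rescaled: "((\<lambda>u. F ((u - c) / (y - c))) has_integral K * V) {c..y}"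
    by simp
  show ?thesis
    unfolding K_def[symmetric] V_def[symmetric]
  proof (rule has_integral_spike_finite[OF _ _ rescaled])
    show "(1 - \<alpha> * u) / (1 - u^2) * (u / sqrt ((a - u) * (b - u) * (u - c))) = F ((u - c) / (y - c))"
      if "u \<in> {c..y} - {c}" for u
      using that assms(1-5) unfolding F_def K_def xs_def by (intro integrand_at_substitution) auto
  qed simp
qed

end
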